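(* Let $G=\langle A,B\rangle$ be an abstract rank one group with unipotent subgroups $A,B$ and $V$ a $\mathbb{Z}G$-module with $[V,A,A,A]=0$, $[V,G,G,G]\neq0$, $[V,G]=V$ and $C_V(G)=0$, and suppose $A_0:=C_A([V,A])\cap C_A(V/C_V(A))\neq1$. Let $B_0=\{1\}\cup\{b(a):a\in A_0\setminus\{1\}\}$ and $G_0=\langle A_0,B_0\rangle$. Then (a) $[V,A]\cap[V,B]=C_V(G_0)$; (b) $[V,A]=C_V(A)\oplus C_V(G_0)$.
   Context: $G$ acts on $V$ on the right, $[v,g]=-v+vg$; $[X,Y]$ is the subgroup generated by all such commutators, $[X,Y,Z]=[[X,Y],Z]$. Abstract rank one group with unipotent subgroups $A,B$: $G=\langle A,B\rangle$, $A\neq B$ nilpotent, for each $a\in A\setminus\{1\}$ there is $b(a)\in B\setminus\{1\}$ with $B^a=A^{b(a)}$, and for each $b\in B\setminus\{1\}$ some $a(b)\in A\setminus\{1\}$ with $A^b=B^{a(b)}$. ($B_0$ is a subgroup of $B$ and $G_0$ is a rank one group with unipotent subgroups $A_0,B_0$.) *)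

theory Defs
  imports "HOL-Algebra.Algebra"
begin

fun lower_central :: "('g, 'b) monoid_scheme \<Rightarrow> 'g set \<Rightarrow> nat \<Rightarrow> 'g set" where
  "lower_central G H 0 = H"
| "lower_central G H (Suc n) =
     generate G {x \<otimes>\<^bsub>G\<^esub> y \<otimes>\<^bsub>G\<^esub> inv\<^bsub>G\<^esub> x \<otimes>\<^bsub>G\<^esub> inv\<^bsub>G\<^esub> y | x y. x \<in> lower_central G H n \<and> y \<in> H}"

definition nilpotent_subgroup :: "('g, 'b) monoid_scheme \<Rightarrow> 'g set \<Rightarrow> bool" where
  "nilpotent_subgroup G H \<longleftrightarrow> subgroup H G \<and> (\<exists>n. lower_central G H n = {\<one>\<^bsub>G\<^esub>})"

text \<open>Conjugate X^g = g^{-1} X g (right action convention).\<close>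
definition conj_set :: "('g, 'b) monoid_scheme \<Rightarrow> 'g set \<Rightarrow> 'g \<Rightarrow> 'g set" where
  "conj_set G S g = (\<lambda>x. inv\<^bsub>G\<^esub> g \<otimes>\<^bsub>G\<^esub> x \<otimes>\<^bsub>G\<^esub> g) ` S"

definition rank_one_group :: "('g, 'b) monoid_scheme \<Rightarrow> 'g set \<Rightarrow> 'g set \<Rightarrow> bool" where
  "rank_one_group G A B \<longleftrightarrow>
     group G \<and> subgroup A G \<and> subgroup B G \<and>
     carrier G = generate G (A \<union> B) \<and> A \<noteq> B \<and>
     nilpotent_subgroup G A \<and> nilpotent_subgroup G B \<and>
     (\<forall>a \<in> A - {\<one>\<^bsub>G\<^esub>}. \<exists>b \<in> B - {\<one>\<^bsub>G\<^esub>}. conj_set G B a = conj_set G A b) \<and>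
     (\<forall>b \<in> B - {\<one>\<^bsub>G\<^esub>}. \<exists>a \<in> A - {\<one>\<^bsub>G\<^esub>}. conj_set G A b = conj_set G B a)"

text \<open>V is the abelian group 'v (the whole type); act v g = vg is a right action of G
  by group automorphisms, i.e. a right ZG-module structure.\<close>
definition right_module :: "('g, 'b) monoid_scheme \<Rightarrow> ('v::ab_group_add \<Rightarrow> 'g \<Rightarrow> 'v) \<Rightarrow> bool" where
  "right_module G act \<longleftrightarrow>
     (\<forall>g \<in> carrier G. \<forall>v w. act (v + w) g = act v g + act w g) \<and>
     (\<forall>v. act v \<one>\<^bsub>G\<^esub> = v) \<and>
     (\<forall>g \<in> carrier G. \<forall>h \<in> carrier G. \<forall>v. act v (g \<otimes>\<^bsub>G\<^esub> h) = act (act v g) h)"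

definition add_gen :: "'v::ab_group_add set \<Rightarrow> 'v set" where
  "add_gen S = \<Inter>{H. 0 \<in> H \<and> (\<forall>x\<in>H. \<forall>y\<in>H. x + y \<in> H) \<and> (\<forall>x\<in>H. - x \<in> H) \<and> S \<subseteq> H}"

definition mcomm :: "('v::ab_group_add \<Rightarrow> 'g \<Rightarrow> 'v) \<Rightarrow> 'v \<Rightarrow> 'g \<Rightarrow> 'v" where
  "mcomm act v g = - v + act v g"

definition mcomm_set :: "('v::ab_group_add \<Rightarrow> 'g \<Rightarrow> 'v) \<Rightarrow> 'v set \<Rightarrow> 'g set \<Rightarrow> 'v set" where
  "mcomm_set act P Q = add_gen {mcomm act x y | x y. x \<in> P \<and> y \<in> Q}"

definition centralizer_V :: "('v \<Rightarrow> 'g \<Rightarrow> 'v) \<Rightarrow> 'g set \<Rightarrow> 'v set" where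
  "centralizer_V act Y = {v. \<forall>g \<in> Y. act v g = v}"

definition centralizer_in :: "('v \<Rightarrow> 'g \<Rightarrow> 'v) \<Rightarrow> 'g set \<Rightarrow> 'v set \<Rightarrow> 'g set" where
  "centralizer_in act A P = {a \<in> A. \<forall>v \<in> P. act v a = v}"

text \<open>C_A(V/W): elements of A acting trivially on the quotient V/W.\<close>
definition centralizer_quot :: "('v::ab_group_add \<Rightarrow> 'g \<Rightarrow> 'v) \<Rightarrow> 'g set \<Rightarrow> 'v set \<Rightarrow> 'g set" where
  "centralizer_quot act A W = {a \<in> A. \<forall>v. mcomm act v a \<in> W}"

definition set_plus_V :: "'v::ab_group_add set \<Rightarrow> 'v set \<Rightarrow> 'v set" where
  "set_plus_V P Q = {x + y | x y. x \<in> P \<and> y \<in> Q}"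

definition is_direct_sum :: "'v::ab_group_add set \<Rightarrow> 'v set \<Rightarrow> 'v set \<Rightarrow> bool" where
  "is_direct_sum Z P Q \<longleftrightarrow> Z = set_plus_V P Q \<and> P \<inter> Q = {0}"

end

theory Submission
  imports Defs
begin

text \<open>
  Fix \<open>a \<in> A\<^sub>0 - {1}\<close> and \<open>b = b(a)\<close>; then \<open>x = b a\<inverse>\<close> conjugates \<open>A\<close> onto \<open>B\<close>, and \<open>a\<^sup>x \<in> B\<close>
  centralizes \<open>[V,B]\<close> and acts quadratically on \<open>V\<close> relative to \<open>C\<^sub>V(B)\<close>, so the situation is
  symmetric in \<open>A\<close> and \<open>B\<close>. A vector of \<open>C\<^sub>V(A)\<close> fixed by some \<open>1 \<noteq> g \<in> B\<close> is fixed by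
  some \<open>y \<in> A g\<inverse>\<close> with \<open>B\<^sup>y = A\<close>, hence by \<open>B\<close> and \<open>G\<close>, hence zero. Applied to \<open>a\<^sup>x\<close> this gives
  \<open>C\<^sub>V(A) \<inter> [V,B] = 0\<close> and \<open>C\<^sub>V(A) \<le> [V,A]\<close>, and expanding \<open>u x = (u b) a\<inverse>\<close> shows
  \<open>[V,A] \<le> [V,B] + C\<^sub>V(A)\<close>; by symmetry \<open>[V,B] \<le> [V,A] + C\<^sub>V(B)\<close>. The cubic condition
  transported by \<open>x\<close> gives \<open>[V,B,B] \<le> C\<^sub>V(B)\<close>, which makes every \<open>b(a')\<close>, \<open>a' \<in> A\<^sub>0\<close>,
  centralize \<open>[V,A] \<inter> [V,B]\<close>. Conversely, writing a \<open>G\<^sub>0\<close>-fixed vector in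
  \<open>V = [V,A] + [V,B]\<close> and using that it is fixed by \<open>a\<close> and \<open>b\<close>, the two decompositions put
  it into \<open>[V,A] \<inter> [V,B]\<close>; the direct sum \<open>[V,A] = C\<^sub>V(A) \<oplus> C\<^sub>V(G\<^sub>0)\<close> then follows.
\<close>

lemma add_gen_incl: "x \<in> S \<Longrightarrow> x \<in> add_gen S"
  unfolding add_gen_def by blast

lemma add_gen_zero: "0 \<in> add_gen S"
  unfolding add_gen_def by blast

lemma add_gen_add: "x \<in> add_gen S \<Longrightarrow> y \<in> add_gen S \<Longrightarrow> x + y \<in> add_gen S"
  unfolding add_gen_def by blast

lemma add_gen_neg: "x \<in> add_gen S \<Longrightarrow> - x \<in> add_gen S"
  unfolding add_gen_def by blast

lemma add_gen_diff: "x \<in> add_gen S \<Longrightarrow> y \<in> add_gen S \<Longrightarrow> x - y \<in> add_gen S"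
  using add_gen_add[of x S "- y"] add_gen_neg[of y S] by simp

lemma add_gen_least:
  "0 \<in> H \<Longrightarrow> (\<forall>x\<in>H. \<forall>y\<in>H. x + y \<in> H) \<Longrightarrow> (\<forall>x\<in>H. - x \<in> H) \<Longrightarrow> S \<subseteq> H \<Longrightarrow> add_gen S \<subseteq> H"
  unfolding add_gen_def by blast

lemma add_gen_additive_image:
  fixes f :: "'a::ab_group_add \<Rightarrow> 'c::ab_group_add"
  assumes additive: "\<And>x y. f (x + y) = f x + f y"
    and gens: "\<And>x. x \<in> S \<Longrightarrow> f x \<in> add_gen T"
    and u: "u \<in> add_gen S"
  shows "f u \<in> add_gen T"
proof -
  have f0: "f 0 = 0" using additive[of 0 0] by simp
  have f_neg: "f (- x) = - f x" for x
    using additive[of x "- x"] f0 by (simp add: eq_neg_iff_add_eq_0 add.commute)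
  have "add_gen S \<subseteq> {u. f u \<in> add_gen T}"
    by (rule add_gen_least) (auto simp: f0 f_neg additive gens add_gen_zero add_gen_add add_gen_neg)
  then show ?thesis using u by blast
qed

lemma set_plus_VI: "x \<in> P \<Longrightarrow> y \<in> Q \<Longrightarrow> x + y \<in> set_plus_V P Q"
  unfolding set_plus_V_def by blast

lemma mcomm_setI: "p \<in> P \<Longrightarrow> g \<in> H \<Longrightarrow> mcomm act p g \<in> mcomm_set act P H"
  unfolding mcomm_set_def by (rule add_gen_incl) blast

lemma mcomm_set_zero: "0 \<in> mcomm_set act P H"
  unfolding mcomm_set_def by (rule add_gen_zero)

lemma mcomm_set_add:
  "x \<in> mcomm_set act P H \<Longrightarrow> y \<in> mcomm_set act P H \<Longrightarrow> x + y \<in> mcomm_set act P H"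
  unfolding mcomm_set_def by (rule add_gen_add)

lemma mcomm_set_neg: "x \<in> mcomm_set act P H \<Longrightarrow> - x \<in> mcomm_set act P H"
  unfolding mcomm_set_def by (rule add_gen_neg)

lemma mcomm_set_diff:
  "x \<in> mcomm_set act P H \<Longrightarrow> y \<in> mcomm_set act P H \<Longrightarrow> x - y \<in> mcomm_set act P H"
  unfolding mcomm_set_def by (rule add_gen_diff)

lemma set_plus_V_mcomm_set_zero: "0 \<in> set_plus_V (mcomm_set act P H) (mcomm_set act Q K)"
  using set_plus_VI[OF mcomm_set_zero mcomm_set_zero] by simp

lemma set_plus_V_mcomm_set_add:
  assumes "x \<in> set_plus_V (mcomm_set act P H) (mcomm_set act Q K)"
    and "y \<in> set_plus_V (mcomm_set act P H) (mcomm_set act Q K)"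
  shows "x + y \<in> set_plus_V (mcomm_set act P H) (mcomm_set act Q K)"
proof -
  obtain x1 x2 where x: "x = x1 + x2" "x1 \<in> mcomm_set act P H" "x2 \<in> mcomm_set act Q K"
    using assms(1) unfolding set_plus_V_def by blast
  obtain y1 y2 where y: "y = y1 + y2" "y1 \<in> mcomm_set act P H" "y2 \<in> mcomm_set act Q K"
    using assms(2) unfolding set_plus_V_def by blast
  have "x + y = (x1 + y1) + (x2 + y2)" using x y by (simp add: algebra_simps)
  then show ?thesis using x y mcomm_set_add set_plus_VI by metis
qed

lemma set_plus_V_mcomm_set_neg:
  assumes "x \<in> set_plus_V (mcomm_set act P H) (mcomm_set act Q K)"
  shows "- x \<in> set_plus_V (mcomm_set act P H) (mcomm_set act Q K)"
proof -
  obtain x1 x2 where x: "x = x1 + x2" "x1 \<in> mcomm_set act P H" "x2 \<in> mcomm_set act Q K"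
    using assms unfolding set_plus_V_def by blast
  have "- x = - x1 + - x2" using x by simp
  then show ?thesis using x mcomm_set_neg set_plus_VI by metis
qed

context group
begin

lemma conj_setI: "s \<in> S \<Longrightarrow> inv g \<otimes> s \<otimes> g \<in> conj_set G S g"
  unfolding conj_set_def by blast

lemma conj_set_one: "S \<subseteq> carrier G \<Longrightarrow> conj_set G S \<one> = S"
  unfolding conj_set_def by (auto simp: subset_iff)

lemma conj_set_mult:
  assumes "S \<subseteq> carrier G" "g \<in> carrier G" "h \<in> carrier G"
  shows "conj_set G (conj_set G S g) h = conj_set G S (g \<otimes> h)"
  unfolding conj_set_def image_image
proof (rule image_cong[OF refl])
  fix s assume "s \<in> S"
  with assms show "inv h \<otimes> (inv g \<otimes> s \<otimes> g) \<otimes> h = inv (g \<otimes> h) \<otimes> s \<otimes> (g \<otimes> h)"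
    by (simp add: inv_mult_group m_assoc subset_iff)
qed

lemma conj_set_eq_swap:
  assumes H: "H \<subseteq> carrier G" and K: "K \<subseteq> carrier G"
    and p: "p \<in> carrier G" and q: "q \<in> carrier G"
    and eq: "conj_set G H p = conj_set G K q"
  shows "conj_set G K (q \<otimes> inv p) = H"
proof -
  have "conj_set G K (q \<otimes> inv p) = conj_set G (conj_set G H p) (inv p)"
    using K p q by (simp add: conj_set_mult eq)
  also have "\<dots> = H" using H p by (simp add: conj_set_mult conj_set_one)
  finally show ?thesis .
qed

end

locale rmodule = group G for G :: "('g, 'b) monoid_scheme" (structure) +
  fixes act :: "'v::ab_group_add \<Rightarrow> 'g \<Rightarrow> 'v"
  assumes right_module: "right_module G act"
begin

lemma act_add: "g \<in> carrier G \<Longrightarrow> act (v + w) g = act v g + act w g"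
  using right_module unfolding right_module_def by blast

lemma act_one [simp]: "act v \<one> = v"
  using right_module unfolding right_module_def by blast

lemma act_mult: "g \<in> carrier G \<Longrightarrow> h \<in> carrier G \<Longrightarrow> act v (g \<otimes> h) = act (act v g) h"
  using right_module unfolding right_module_def by blast

lemma act_zero [simp]: "g \<in> carrier G \<Longrightarrow> act 0 g = 0"
  using act_add[of g 0 0] by simp

lemma act_neg: "g \<in> carrier G \<Longrightarrow> act (- v) g = - act v g"
  using act_add[of g v "- v"] by (simp add: eq_neg_iff_add_eq_0 add.commute)

lemma act_diff: "g \<in> carrier G \<Longrightarrow> act (v - w) g = act v g - act w g"
  using act_add[of g v "- w"] act_neg[of g w] by simp

lemma act_act_inv [simp]: "g \<in> carrier G \<Longrightarrow> act (act v g) (inv g) = v"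
  using act_mult[of g "inv g" v] by simp

lemma act_inv_act [simp]: "g \<in> carrier G \<Longrightarrow> act (act v (inv g)) g = v"
  using act_mult[of "inv g" g v] by simp

lemma act_inv_fixed: "g \<in> carrier G \<Longrightarrow> act v g = v \<Longrightarrow> act v (inv g) = v"
  using act_act_inv[of g v] by simp

lemma act_eq_add_mcomm: "act v g = v + mcomm act v g"
  unfolding mcomm_def by simp

lemma mcomm_eq_zero_iff: "mcomm act v g = 0 \<longleftrightarrow> act v g = v"
  unfolding mcomm_def by (simp add: algebra_simps)

lemma mcomm_mult:
  "g \<in> carrier G \<Longrightarrow> h \<in> carrier G \<Longrightarrow> mcomm act v (g \<otimes> h) = mcomm act v g + mcomm act (act v g) h"
  unfolding mcomm_def by (simp add: act_mult)

lemma mcomm_inv: "g \<in> carrier G \<Longrightarrow> mcomm act v (inv g) = - mcomm act (act v (inv g)) g"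
  unfolding mcomm_def by simp

lemma act_mcomm:
  assumes g: "g \<in> carrier G" and y: "y \<in> carrier G"
  shows "act (mcomm act p g) y = mcomm act (act p y) (inv y \<otimes> g \<otimes> y)"
proof -
  have "y \<otimes> (inv y \<otimes> g \<otimes> y) = g \<otimes> y" using g y by (simp add: m_assoc[symmetric])
  then have "act (act p y) (inv y \<otimes> g \<otimes> y) = act (act p g) y"
    using g y by (metis act_mult inv_closed m_closed)
  then show ?thesis unfolding mcomm_def using g y by (simp add: act_add act_neg act_diff)
qed

lemma act_mcomm_set:
  assumes y: "y \<in> carrier G" and H: "H \<subseteq> carrier G"
    and P: "\<And>p. p \<in> P \<Longrightarrow> act p y \<in> P'" and HK: "conj_set G H y \<subseteq> K"
    and u: "u \<in> mcomm_set act P H"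
  shows "act u y \<in> mcomm_set act P' K"
proof -
  have "act w y \<in> add_gen {mcomm act x g |x g. x \<in> P' \<and> g \<in> K}"
    if gen: "w \<in> {mcomm act x g |x g. x \<in> P \<and> g \<in> H}" for w
  proof -
    obtain p g where w: "w = mcomm act p g" "p \<in> P" "g \<in> H" using gen by blast
    have "act w y = mcomm act (act p y) (inv y \<otimes> g \<otimes> y)" using w H y act_mcomm by auto
    then show ?thesis using P HK w conj_setI[of g H y] by (auto intro!: add_gen_incl)
  qed
  then show ?thesis
    using add_gen_additive_image[where f = "\<lambda>u. act u y", OF act_add[OF y]] u
    unfolding mcomm_set_def by blast
qed

lemma act_centralizer_V:
  assumes y: "y \<in> carrier G" and H: "H \<subseteq> carrier G" and z: "z \<in> centralizer_V act H"
  shows "act z y \<in> centralizer_V act (conj_set G H y)"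
  unfolding centralizer_V_def conj_set_def
proof (intro CollectI ballI, elim imageE)
  fix k h assume k: "k = inv y \<otimes> h \<otimes> y" and h: "h \<in> H"
  have hc: "h \<in> carrier G" using h H by blast
  have "y \<otimes> k = h \<otimes> y" using k hc y by (simp add: m_assoc[symmetric])
  then have "act (act z y) k = act (act z h) y"
    using k hc y by (metis act_mult inv_closed m_closed)
  then show "act (act z y) k = act z y" using z h unfolding centralizer_V_def by simp
qed

lemma centralizer_V_zero: "H \<subseteq> carrier G \<Longrightarrow> 0 \<in> centralizer_V act H"
  unfolding centralizer_V_def by (auto simp: subset_iff)

lemma centralizer_V_neg: "H \<subseteq> carrier G \<Longrightarrow> z \<in> centralizer_V act H \<Longrightarrow> - z \<in> centralizer_V act H"
  unfolding centralizer_V_def by (auto simp: act_neg subset_iff)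

lemma centralizer_V_diff:
  "H \<subseteq> carrier G \<Longrightarrow> z \<in> centralizer_V act H \<Longrightarrow> z' \<in> centralizer_V act H
   \<Longrightarrow> z - z' \<in> centralizer_V act H"
  unfolding centralizer_V_def by (auto simp: act_diff subset_iff)

lemma centralizer_V_generate:
  assumes S: "S \<subseteq> carrier G"
  shows "centralizer_V act (generate G S) = centralizer_V act S"
proof
  show "centralizer_V act (generate G S) \<subseteq> centralizer_V act S"
    unfolding centralizer_V_def by (auto intro: generate.incl)
  show "centralizer_V act S \<subseteq> centralizer_V act (generate G S)"
  proof
    fix v assume v: "v \<in> centralizer_V act S"
    then have fixed: "act v s = v" if "s \<in> S" for s
      using that unfolding centralizer_V_def by blast
    have "act v h = v" if "h \<in> generate G S" for h
      using that
    proof (induction rule: generate.induct)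
      case one
      then show ?case by simp
    next
      case (incl h)
      then show ?case by (rule fixed)
    next
      case (inv h)
      then show ?case using S by (intro act_inv_fixed fixed) auto
    next
      case (eng h1 h2)
      then show ?case using generate_in_carrier[OF S] by (simp add: act_mult)
    qed
    then show "v \<in> centralizer_V act (generate G S)" unfolding centralizer_V_def by blast
  qed
qed

lemma mcomm_set_generate:
  assumes H: "H \<subseteq> carrier G" and K: "K \<subseteq> carrier G"
  shows "mcomm_set act UNIV (generate G (H \<union> K))
           \<subseteq> set_plus_V (mcomm_set act UNIV H) (mcomm_set act UNIV K)"
    (is "_ \<subseteq> ?sum")
proof -
  have generator: "mcomm act v h \<in> ?sum" if "h \<in> H \<union> K" for h v
    using that set_plus_VI[OF mcomm_setI[of v UNIV h H act] mcomm_set_zero]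
      set_plus_VI[OF mcomm_set_zero mcomm_setI[of v UNIV h K act]] by auto
  have "mcomm act v h \<in> ?sum" if "h \<in> generate G (H \<union> K)" for h v
    using that
  proof (induction arbitrary: v rule: generate.induct)
    case one
    then show ?case using set_plus_V_mcomm_set_zero by (simp add: mcomm_def)
  next
    case (incl h)
    then show ?case by (rule generator)
  next
    case (inv h)
    then have "mcomm act v (inv h) = - mcomm act (act v (inv h)) h"
      using H K by (intro mcomm_inv) blast
    then show ?case using set_plus_V_mcomm_set_neg[OF generator[OF inv]] by simp
  next
    case (eng h1 h2)
    then have "h1 \<in> carrier G" "h2 \<in> carrier G"
      using generate_in_carrier[of "H \<union> K"] H K by auto
    then show ?case using eng.IH by (simp add: mcomm_mult set_plus_V_mcomm_set_add)
  qed
  then show ?thesis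
    unfolding mcomm_set_def[of act UNIV "generate G (H \<union> K)"]
  proof (intro add_gen_least)
    show "0 \<in> ?sum" by (rule set_plus_V_mcomm_set_zero)
  qed (auto intro: set_plus_V_mcomm_set_add set_plus_V_mcomm_set_neg)
qed

lemma centralizer_V_conj_set_fixed:
  assumes H: "H \<subseteq> carrier G" and K: "K \<subseteq> carrier G"
    and generate: "generate G (H \<union> K) = carrier G"
    and no_fixed_points: "centralizer_V act (carrier G) = {0}"
    and p: "p \<in> H" and g: "g \<in> carrier G" and eq: "conj_set G H g = conj_set G K p"
    and z: "z \<in> centralizer_V act H" and zg: "act z g = z"
  shows "z = 0"
proof -
  define y where "y = p \<otimes> inv g"
  have pc: "p \<in> carrier G" and y: "y \<in> carrier G" using p H g by (auto simp: y_def)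
  have conj_K: "conj_set G K y = H"
    unfolding y_def using conj_set_eq_swap[OF H K g pc eq] .
  have "act z y = z"
    using z p pc g zg unfolding y_def centralizer_V_def by (simp add: act_mult act_inv_fixed)
  then have "act z (inv y) = z" by (rule act_inv_fixed[OF y])
  moreover have "conj_set G H (inv y) = K"
    using K y by (simp flip: conj_K add: conj_set_mult conj_set_one)
  ultimately have "z \<in> centralizer_V act K"
    using act_centralizer_V[OF inv_closed[OF y] H z] by simp
  with z have "z \<in> centralizer_V act (H \<union> K)" unfolding centralizer_V_def by blast
  moreover have "centralizer_V act (H \<union> K) = {0}"
    using centralizer_V_generate[of "H \<union> K"] H K generate no_fixed_points by simp
  ultimately show ?thesis by simp
qed

end

locale rank_one_module = rmodule G act
  for G :: "('g, 'b) monoid_scheme" (structure) and act :: "'v::ab_group_add \<Rightarrow> 'g \<Rightarrow> 'v" +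
  fixes A B :: "'g set"
  assumes subgroup_A: "subgroup A G" and subgroup_B: "subgroup B G"
    and generate_A_B: "generate G (A \<union> B) = carrier G"
    and conj_A_B: "\<forall>a \<in> A - {\<one>}. \<exists>b \<in> B - {\<one>}. conj_set G B a = conj_set G A b"
    and conj_B_A: "\<forall>b \<in> B - {\<one>}. \<exists>a \<in> A - {\<one>}. conj_set G A b = conj_set G B a"
    and no_fixed_points: "centralizer_V act (carrier G) = {0}"
begin

abbreviation "VA \<equiv> mcomm_set act UNIV A"
abbreviation "VB \<equiv> mcomm_set act UNIV B"
abbreviation "CA \<equiv> centralizer_V act A"
abbreviation "CB \<equiv> centralizer_V act B"

lemma A_carrier: "A \<subseteq> carrier G" and B_carrier: "B \<subseteq> carrier G"
  using subgroup_A subgroup_B by (auto dest: subgroup.subset)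

lemma rank_one_module_swap: "rank_one_module G act B A"
  using rmodule_axioms subgroup_A subgroup_B generate_A_B conj_A_B conj_B_A no_fixed_points
  by (simp add: rank_one_module_def rank_one_module_axioms_def Un_commute)

lemma CA_fixed_by_B_zero:
  assumes z: "z \<in> CA" and g: "g \<in> B" "g \<noteq> \<one>" and zg: "act z g = z"
  shows "z = 0"
proof -
  obtain p where "p \<in> A" "conj_set G A g = conj_set G B p" using conj_B_A g by blast
  then show ?thesis
    using centralizer_V_conj_set_fixed[OF A_carrier B_carrier generate_A_B no_fixed_points _ _ _ z zg]
      g B_carrier by blast
qed

lemma CB_fixed_by_A_zero: "z \<in> CB \<Longrightarrow> g \<in> A \<Longrightarrow> g \<noteq> \<one> \<Longrightarrow> act z g = z \<Longrightarrow> z = 0"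
  using rank_one_module.CA_fixed_by_B_zero[OF rank_one_module_swap] .

lemma set_plus_VA_VB:
  assumes "mcomm_set act UNIV (carrier G) = UNIV"
  shows "set_plus_V VA VB = UNIV"
  using mcomm_set_generate[OF A_carrier B_carrier] assms generate_A_B by auto

end

definition quadratic_centralizer :: "('v::ab_group_add \<Rightarrow> 'g \<Rightarrow> 'v) \<Rightarrow> 'g set \<Rightarrow> 'g set" where
  "quadratic_centralizer act A =
     centralizer_in act A (mcomm_set act UNIV A) \<inter> centralizer_quot act A (centralizer_V act A)"

lemma quadratic_centralizer_iff:
  "a \<in> quadratic_centralizer act A \<longleftrightarrow>
     a \<in> A \<and> (\<forall>u \<in> mcomm_set act UNIV A. act u a = u) \<and> (\<forall>v. mcomm act v a \<in> centralizer_V act A)"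
  unfolding quadratic_centralizer_def centralizer_in_def centralizer_quot_def by blast

locale quadratic_rank_one_module = rank_one_module +
  fixes a b
  assumes a_quadratic: "a \<in> quadratic_centralizer act A" and a_nontrivial: "a \<noteq> \<one>"
    and b_B: "b \<in> B" and b_nontrivial: "b \<noteq> \<one>"
    and conj_a_b: "conj_set G B a = conj_set G A b"
begin

abbreviation "conjugator \<equiv> b \<otimes> inv a"
abbreviation "a_conj \<equiv> inv conjugator \<otimes> a \<otimes> conjugator"

lemma a_A: "a \<in> A"
  and a_fixes_VA: "u \<in> VA \<Longrightarrow> act u a = u"
  and mcomm_a_CA: "mcomm act v a \<in> CA"
  using a_quadratic by (auto simp: quadratic_centralizer_iff)

lemma a_carrier: "a \<in> carrier G" and b_carrier: "b \<in> carrier G"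
  and conjugator_carrier: "conjugator \<in> carrier G"
  using a_A b_B A_carrier B_carrier by auto

lemma mcomm_inv_a_CA: "mcomm act v (inv a) \<in> CA"
  using mcomm_inv[OF a_carrier] centralizer_V_neg[OF A_carrier mcomm_a_CA] by simp

lemma conj_A_conjugator: "conj_set G A conjugator = B"
  using conj_set_eq_swap[OF B_carrier A_carrier a_carrier b_carrier conj_a_b] .

lemma conj_B_conjugator_inv: "conj_set G B (inv conjugator) = A"
  using A_carrier conjugator_carrier
  by (simp flip: conj_A_conjugator add: conj_set_mult conj_set_one)

lemma VA_conjugator: "u \<in> VA \<Longrightarrow> act u conjugator \<in> VB"
  using act_mcomm_set[OF conjugator_carrier A_carrier _ equalityD1[OF conj_A_conjugator]] by blast

lemma VB_conjugator_inv: "u \<in> VB \<Longrightarrow> act u (inv conjugator) \<in> VA"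
  using act_mcomm_set[OF inv_closed[OF conjugator_carrier] B_carrier _
      equalityD1[OF conj_B_conjugator_inv]] by blast

lemma CA_conjugator: "z \<in> CA \<Longrightarrow> act z conjugator \<in> CB"
  using act_centralizer_V[OF conjugator_carrier A_carrier] conj_A_conjugator by simp

lemma a_conj_B: "a_conj \<in> B"
  using conj_setI[OF a_A, of conjugator] conj_A_conjugator by simp

lemma a_conj_nontrivial: "a_conj \<noteq> \<one>"
proof
  assume "a_conj = \<one>"
  then have "conjugator \<otimes> a_conj \<otimes> inv conjugator = \<one>"
    using conjugator_carrier by simp
  moreover have "conjugator \<otimes> a_conj \<otimes> inv conjugator = a"
    using conjugator_carrier a_carrier by (simp add: m_assoc[symmetric], simp add: m_assoc)
  ultimately show False using a_nontrivial by simp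
qed

lemma a_conj_quadratic: "a_conj \<in> quadratic_centralizer act B"
  unfolding quadratic_centralizer_iff
proof (intro conjI allI ballI a_conj_B)
  fix u assume "u \<in> VB"
  then have "act (act u (inv conjugator)) a = act u (inv conjugator)"
    by (intro a_fixes_VA VB_conjugator_inv)
  then show "act u a_conj = u"
    using conjugator_carrier a_carrier by (simp add: act_mult)
next
  fix v
  have "act (mcomm act (act v (inv conjugator)) a) conjugator = mcomm act v a_conj"
    using act_mcomm[OF a_carrier conjugator_carrier] conjugator_carrier by simp
  then show "mcomm act v a_conj \<in> CB"
    using CA_conjugator[OF mcomm_a_CA] by metis
qed

lemma a_conj_fixes_VB: "u \<in> VB \<Longrightarrow> act u a_conj = u"
  using a_conj_quadratic by (simp add: quadratic_centralizer_iff)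

lemma CA_inter_VB: "z \<in> CA \<Longrightarrow> z \<in> VB \<Longrightarrow> z = 0"
  using CA_fixed_by_B_zero a_conj_B a_conj_nontrivial a_conj_fixes_VB by blast

lemma CA_subset_VA:
  assumes z: "z \<in> CA"
  shows "z \<in> VA"
proof -
  define y where "y = act z conjugator"
  have y: "y \<in> CB" unfolding y_def using CA_conjugator[OF z] .
  have "act y a = act z b"
    unfolding y_def using a_carrier b_carrier by (simp flip: act_mult add: m_assoc)
  then have t_eq: "z - mcomm act y a = y - mcomm act z b"
    unfolding mcomm_def by (simp add: algebra_simps)
  have "z - mcomm act y a \<in> CA"
    using centralizer_V_diff[OF A_carrier z mcomm_a_CA] .
  moreover have "act (y - mcomm act z b) a_conj = y - mcomm act z b"
    using y a_conj_B a_conj_fixes_VB[OF mcomm_setI[OF UNIV_I b_B]] conjugator_carrier a_carrier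
    unfolding centralizer_V_def by (simp add: act_diff)
  ultimately have "z - mcomm act y a = 0"
    using CA_fixed_by_B_zero a_conj_B a_conj_nontrivial t_eq by metis
  then show ?thesis using mcomm_setI[OF UNIV_I a_A] by simp
qed

lemma VA_decompose:
  assumes u: "u \<in> VA"
  shows "\<exists>z \<in> CA. u + z \<in> VB"
proof
  have "act u conjugator = act (act u b) (inv a)"
    using a_carrier b_carrier by (simp add: act_mult)
  also have "\<dots> = u + mcomm act u b + mcomm act (act u b) (inv a)"
    by (simp add: act_eq_add_mcomm)
  finally have "u + mcomm act (act u b) (inv a) = act u conjugator - mcomm act u b"
    by (simp add: algebra_simps)
  then show "u + mcomm act (act u b) (inv a) \<in> VB"
    using mcomm_set_diff[OF VA_conjugator[OF u] mcomm_setI[OF UNIV_I b_B]] by simp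
qed (rule mcomm_inv_a_CA)

lemma quadratic_rank_one_module_swap:
  obtains a' where "quadratic_rank_one_module G act B A a_conj a'"
proof -
  obtain a' where "a' \<in> A" "a' \<noteq> \<one>" "conj_set G A a_conj = conj_set G B a'"
    using conj_B_A a_conj_B a_conj_nontrivial by blast
  then show ?thesis
    using that rank_one_module_swap a_conj_quadratic a_conj_nontrivial
    by (simp add: quadratic_rank_one_module_def quadratic_rank_one_module_axioms_def)
qed

lemma VB_decompose: "u \<in> VB \<Longrightarrow> \<exists>z \<in> CB. u + z \<in> VA"
  using quadratic_rank_one_module_swap quadratic_rank_one_module.VA_decompose by metis

lemma cubic_B:
  assumes cubic: "mcomm_set act (mcomm_set act VA A) A = {0}"
  shows "mcomm_set act (mcomm_set act VB B) B = {0}"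
proof
  let ?y = "inv conjugator"
  have y: "?y \<in> carrier G" using conjugator_carrier by simp
  note transport = act_mcomm_set[OF y B_carrier _ equalityD1[OF conj_B_conjugator_inv]]
  show "mcomm_set act (mcomm_set act VB B) B \<subseteq> {0}"
  proof
    fix u assume "u \<in> mcomm_set act (mcomm_set act VB B) B"
    then have "act u ?y \<in> mcomm_set act (mcomm_set act VA A) A"
      by (intro transport) (auto intro: transport VB_conjugator_inv)
    then have "act u ?y = 0" using cubic by blast
    then have "act (act u ?y) conjugator = 0" using conjugator_carrier by simp
    then show "u \<in> {0}" using conjugator_carrier by simp
  qed
qed (simp add: mcomm_set_zero)

lemma mcomm_VB_B_subset_CB:
  assumes cubic: "mcomm_set act (mcomm_set act VA A) A = {0}"
    and d: "d \<in> mcomm_set act VB B"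
  shows "d \<in> CB"
  unfolding centralizer_V_def
proof (intro CollectI ballI)
  fix h assume "h \<in> B"
  with d have "mcomm act d h \<in> mcomm_set act (mcomm_set act VB B) B" by (rule mcomm_setI)
  then show "act d h = d" using cubic_B[OF cubic] by (simp add: mcomm_eq_zero_iff)
qed

lemma VA_inter_VB_fixed_b:
  assumes cubic: "mcomm_set act (mcomm_set act VA A) A = {0}"
    and wA: "w \<in> VA" and wB: "w \<in> VB"
  shows "act w b = w"
proof -
  define wb where "wb = act w b"
  have wb: "wb \<in> VB"
    unfolding wb_def act_eq_add_mcomm[of w b] using wB mcomm_setI[OF UNIV_I b_B]
    by (rule mcomm_set_add)
  have "act w conjugator = act wb (inv a)"
    unfolding wb_def using a_carrier b_carrier by (simp add: act_mult)
  then have "mcomm act wb (inv a) = act w conjugator - wb"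
    unfolding mcomm_def by simp
  then have "mcomm act wb (inv a) \<in> VB"
    using mcomm_set_diff[OF VA_conjugator[OF wA] wb] by simp
  then have "act wb (inv a) = wb"
    using CA_inter_VB[OF mcomm_inv_a_CA] by (simp add: mcomm_eq_zero_iff)
  then have wb_a: "act wb a = wb"
    using act_inv_fixed[of "inv a" wb] a_carrier by simp
  define d where "d = mcomm act w b"
  have "d \<in> CB"
    unfolding d_def using mcomm_VB_B_subset_CB[OF cubic mcomm_setI[OF wB b_B]] .
  moreover have "act d a = d"
    unfolding d_def mcomm_def using wb_a a_fixes_VA[OF wA] a_carrier
    by (simp add: act_add act_neg act_diff wb_def)
  ultimately have "d = 0"
    using CB_fixed_by_A_zero a_A a_nontrivial by blast
  then show ?thesis unfolding d_def by (simp add: mcomm_eq_zero_iff)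
qed

lemma centralizer_V_eq_VA_inter_VB:
  assumes VG: "mcomm_set act UNIV (carrier G) = UNIV"
    and a_H: "a \<in> H" and b_H: "b \<in> H" and fixed: "VA \<inter> VB \<subseteq> centralizer_V act H"
  shows "centralizer_V act H = VA \<inter> VB"
proof
  show "centralizer_V act H \<subseteq> VA \<inter> VB"
  proof
    fix v assume "v \<in> centralizer_V act H"
    then have va: "act v a = v" and vb: "act v b = v"
      using a_H b_H unfolding centralizer_V_def by auto
    obtain u1 u2 where v: "v = u1 + u2" and u1: "u1 \<in> VA" and u2: "u2 \<in> VB"
      using set_plus_VA_VB[OF VG] unfolding set_plus_V_def by blast
    obtain y where y: "y \<in> CB" and u2y: "u2 + y \<in> VA"
      using VB_decompose[OF u2] by blast
    have u': "u1 + (u2 + y) \<in> VA" using mcomm_set_add[OF u1 u2y] .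
    have "act v a = act (u1 + (u2 + y)) a - act y a"
      unfolding v using act_diff[OF a_carrier, of "u1 + (u2 + y)" y] by simp
    then have "act y a = y"
      using va v a_fixes_VA[OF u'] by (simp add: algebra_simps)
    then have "y = 0" using CB_fixed_by_A_zero[OF y a_A a_nontrivial] by blast
    then have vA: "v \<in> VA" using u' v by simp
    obtain z where z: "z \<in> CA" and vz: "v + z \<in> VB"
      using VA_decompose[OF vA] by blast
    have "v + z \<in> VA" using mcomm_set_add[OF vA CA_subset_VA[OF z]] .
    then have "act (v + z) b = v + z" using vz fixed b_H unfolding centralizer_V_def by blast
    then have "act z b = z" using vb b_carrier by (simp add: act_add)
    then have "z = 0" using CA_fixed_by_B_zero[OF z b_B b_nontrivial] by blast
    with vA vz show "v \<in> VA \<inter> VB" by simp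
  qed
qed (rule fixed)

lemma is_direct_sum_VA:
  assumes VG: "mcomm_set act UNIV (carrier G) = UNIV"
    and a_H: "a \<in> H" and b_H: "b \<in> H" and fixed: "VA \<inter> VB \<subseteq> centralizer_V act H"
  shows "is_direct_sum VA CA (centralizer_V act H)"
  unfolding is_direct_sum_def centralizer_V_eq_VA_inter_VB[OF assms]
proof
  show "VA = set_plus_V CA (VA \<inter> VB)"
  proof
    show "VA \<subseteq> set_plus_V CA (VA \<inter> VB)"
    proof
      fix u assume u: "u \<in> VA"
      obtain z where z: "z \<in> CA" and uz: "u + z \<in> VB" using VA_decompose[OF u] by blast
      have "u + z \<in> VA" using mcomm_set_add[OF u CA_subset_VA[OF z]] .
      then have "- z + (u + z) \<in> set_plus_V CA (VA \<inter> VB)"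
        using set_plus_VI[OF centralizer_V_neg[OF A_carrier z]] uz by blast
      then show "u \<in> set_plus_V CA (VA \<inter> VB)" by simp
    qed
    show "set_plus_V CA (VA \<inter> VB) \<subseteq> VA"
      unfolding set_plus_V_def using CA_subset_VA mcomm_set_add by blast
  qed
  show "CA \<inter> (VA \<inter> VB) = {0}"
    using CA_inter_VB centralizer_V_zero[OF A_carrier] mcomm_set_zero by blast
qed

end

theorem lemma3p12:
  fixes G :: "('g, 'b) monoid_scheme"
    and A B :: "'g set"
    and act :: "'v::ab_group_add \<Rightarrow> 'g \<Rightarrow> 'v"
  assumes rank1: "rank_one_group G A B"
    and module: "right_module G act"
    and cubic: "mcomm_set act (mcomm_set act (mcomm_set act UNIV A) A) A = {0}"
    and not_quad: "mcomm_set act (mcomm_set act (mcomm_set act UNIV (carrier G)) (carrier G)) (carrier G) \<noteq> {0}"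
    and VG: "mcomm_set act UNIV (carrier G) = UNIV"
    and CVG: "centralizer_V act (carrier G) = {0}"
  defines "A0 \<equiv> centralizer_in act A (mcomm_set act UNIV A) \<inter> centralizer_quot act A (centralizer_V act A)"
  defines "B0 \<equiv> {\<one>\<^bsub>G\<^esub>} \<union> {b \<in> B - {\<one>\<^bsub>G\<^esub>}. \<exists>a \<in> A0 - {\<one>\<^bsub>G\<^esub>}. conj_set G B a = conj_set G A b}"
  defines "G0 \<equiv> generate G (A0 \<union> B0)"
  assumes A0_nontriv: "A0 \<noteq> {\<one>\<^bsub>G\<^esub>}"
  shows "mcomm_set act UNIV A \<inter> mcomm_set act UNIV B = centralizer_V act G0
       \<and> is_direct_sum (mcomm_set act UNIV A) (centralizer_V act A) (centralizer_V act G0)"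
proof -
  interpret rank_one_module G act A B
    using rank1 module CVG
    by (auto simp: rank_one_group_def rank_one_module_def rank_one_module_axioms_def
        rmodule_def rmodule_axioms_def)
  have A0: "A0 = quadratic_centralizer act A"
    unfolding A0_def quadratic_centralizer_def ..
  have "\<one>\<^bsub>G\<^esub> \<in> A0"
    unfolding A0 quadratic_centralizer_iff mcomm_def
    using subgroup.one_closed[OF subgroup_A] centralizer_V_zero[OF A_carrier] by simp
  then obtain a where a: "a \<in> A0" "a \<noteq> \<one>\<^bsub>G\<^esub>" using A0_nontriv by blast
  moreover have "a \<in> A" using a by (simp add: A0 quadratic_centralizer_iff)
  ultimately obtain b where b: "b \<in> B" "b \<noteq> \<one>\<^bsub>G\<^esub>" "conj_set G B a = conj_set G A b"
    using conj_A_B by blast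
  interpret quadratic_rank_one_module G act A B a b
    using a b by unfold_locales (simp_all add: A0)
  have "B0 \<subseteq> B" unfolding B0_def using subgroup.one_closed[OF subgroup_B] by blast
  then have gens: "A0 \<union> B0 \<subseteq> carrier G"
    using A_carrier B_carrier by (auto simp: A0 quadratic_centralizer_iff)
  have fixed: "VA \<inter> VB \<subseteq> centralizer_V act (A0 \<union> B0)"
    unfolding centralizer_V_def
  proof (intro subsetI CollectI ballI)
    fix w g assume w: "w \<in> VA \<inter> VB" and g: "g \<in> A0 \<union> B0"
    show "act w g = w"
    proof (cases "g \<in> A0 \<or> g = \<one>\<^bsub>G\<^esub>")
      case True
      then show ?thesis using w by (auto simp: A0 quadratic_centralizer_iff)
    next
      case False
      then obtain a' where "a' \<in> A0" "a' \<noteq> \<one>\<^bsub>G\<^esub>" "conj_set G B a' = conj_set G A g"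
        and "g \<in> B" "g \<noteq> \<one>\<^bsub>G\<^esub>"
        using g unfolding B0_def by blast
      then have "quadratic_rank_one_module G act A B a' g"
        by unfold_locales (simp_all add: A0)
      from quadratic_rank_one_module.VA_inter_VB_fixed_b[OF this cubic] w show ?thesis
        by simp
    qed
  qed
  have ab: "a \<in> A0 \<union> B0" "b \<in> A0 \<union> B0" using a b unfolding B0_def by auto
  have "centralizer_V act G0 = centralizer_V act (A0 \<union> B0)"
    unfolding G0_def using centralizer_V_generate[OF gens] .
  then show ?thesis
    using centralizer_V_eq_VA_inter_VB[OF VG ab fixed] is_direct_sum_VA[OF VG ab fixed] by simp
qed

end
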